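(* Let $n$ be even and $F\colon\mathbb F_2^n\to\mathbb F_2^n$ a quadratic APN function with linearity $L(F)=2^{\frac{n+l}{2}}$ where $l>n/2$. Then $F$ has exactly one component function with amplitude $2^{\frac{n+l}{2}}$, and all other non-trivial components have amplitude at most $2^{\frac{2n-l}{2}}$. In particular, any quadratic APN function $F\colon\mathbb F_2^n\to\mathbb F_2^n$ ($n$ even) has at most one component function with amplitude larger than $2^{3n/4}$.
   Context: $\langle\cdot,\cdot\rangle$ is the standard dot product. $F$ is APN if for every $a\ne0$ and $c$, $F(x)+F(x+a)=c$ has at most 2 solutions; quadratic if each component $F_b(x)=\langle b,F(x)\rangle$ is a quadratic form plus an affine function; $F_0$ is the trivial component. $W_F(b,a)=\sum_x(-1)^{F_b(x)+\langle x,a\rangle}$; linearity $L(F)=\max_{a,\,b\ne0}|W_F(b,a)|$. For quadratic $F$ and fixed $b$ there is $k$ with $|W_F(b,a)|\in\{0,2^{(n+k)/2}\}$ for all $a$; $2^{(n+k)/2}$ is the amplitude of $F_b$. *)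

theory Defs
  imports Complex_Main "HOL-Library.Cardinality"
begin

text \<open>Vectors of F_2^n are modelled as functions from a finite index type 'n
  (with n = CARD('n)) to bool; addition is pointwise exclusive or.\<close>

type_synonym 'n vec2 = "'n \<Rightarrow> bool"

definition vzero :: "'n vec2" where
  "vzero = (\<lambda>_. False)"

definition vadd :: "'n vec2 \<Rightarrow> 'n vec2 \<Rightarrow> 'n vec2" where
  "vadd x y = (\<lambda>i. x i \<noteq> y i)"

definition dot :: "('n::finite) vec2 \<Rightarrow> 'n vec2 \<Rightarrow> bool" where
  "dot b x = odd (card {i. b i \<and> x i})"

definition component :: "(('n::finite) vec2 \<Rightarrow> ('m::finite) vec2) \<Rightarrow> 'm vec2 \<Rightarrow> 'n vec2 \<Rightarrow> bool" where
  "component F b x = dot b (F x)"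

definition quad_plus_affine :: "(('n::finite) vec2 \<Rightarrow> bool) \<Rightarrow> bool" where
  "quad_plus_affine f \<longleftrightarrow> (\<exists>(q::'n \<Rightarrow> 'n \<Rightarrow> bool) (l::'n vec2) (c::bool).
      \<forall>x. f x = ((odd (card {(i,j). q i j \<and> x i \<and> x j}) \<noteq> dot l x) \<noteq> c))"

definition quadratic :: "(('n::finite) vec2 \<Rightarrow> ('m::finite) vec2) \<Rightarrow> bool" where
  "quadratic F \<longleftrightarrow> (\<forall>b. quad_plus_affine (component F b))"

definition APN :: "(('n::finite) vec2 \<Rightarrow> 'n vec2) \<Rightarrow> bool" where
  "APN F \<longleftrightarrow> (\<forall>a c. a \<noteq> vzero \<longrightarrow> card {x. vadd (F x) (F (vadd x a)) = c} \<le> 2)"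

definition sgn2 :: "bool \<Rightarrow> int" where
  "sgn2 t = (if t then -1 else 1)"

definition walsh :: "(('n::finite) vec2 \<Rightarrow> ('m::finite) vec2) \<Rightarrow> 'm vec2 \<Rightarrow> 'n vec2 \<Rightarrow> int" where
  "walsh F b a = (\<Sum>x\<in>UNIV. sgn2 (component F b x \<noteq> dot x a))"

definition linearity :: "(('n::finite) vec2 \<Rightarrow> ('m::finite) vec2) \<Rightarrow> int" where
  "linearity F = Max {\<bar>walsh F b a\<bar> | a b. b \<noteq> vzero}"

text \<open>Amplitude of F_b: the common nonzero value of |W_F(b,a)|, i.e. its maximum over a.\<close>
definition amplitude :: "(('n::finite) vec2 \<Rightarrow> ('m::finite) vec2) \<Rightarrow> 'm vec2 \<Rightarrow> int" where
  "amplitude F b = Max {\<bar>walsh F b a\<bar> | a. True}"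

end

theory Submission
  imports Defs
begin

(* For quadratic F every derivative D_u F_b is affine, so the squared Walsh coefficients of F_b
   are 0 or 2^n |V_b|, where V_b is the space of directions u in which D_u F_b is constant;
   by Parseval the amplitude A_b of F_b satisfies A_b^2 = 2^n |V_b|.  APN forces V_b and V_c to
   meet trivially for distinct nonzero b, c: summing over all b the squared character sums of
   D_u F counts the pairs x, y with D_u F x = D_u F y, at most 2 * 2^n by APN, whereas the three
   components 0, b, c with u in their spaces already contribute 3 * 4^n.  Hence
   |V_b| |V_c| <= 2^n and A_b A_c <= 2^(3n/2), from which both claims follow. *)

lemma vadd_assoc: "vadd (vadd x y) z = vadd x (vadd y z)"
  by (auto simp: vadd_def)

lemma vadd_vzero [simp]: "vadd x vzero = x" "vadd vzero x = x"
  by (auto simp: vadd_def vzero_def)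

lemma vadd_cancel [simp]: "vadd x (vadd x y) = y" "vadd (vadd y x) x = y"
  by (auto simp: vadd_def)

lemma vadd_eq_vzero_iff: "vadd x y = vzero \<longleftrightarrow> x = y"
  by (auto simp: vadd_def vzero_def fun_eq_iff)

lemma card_vec2: "card (UNIV :: ('n::finite) vec2 set) = 2 ^ CARD('n)"
  by (simp add: card_fun)

lemma sum_vadd_shift:
  "(\<Sum>x\<in>UNIV. g (vadd z x)) = (\<Sum>x\<in>(UNIV::('n::finite) vec2 set). g x)"
  by (rule sum.reindex_bij_witness[where i="vadd z" and j="vadd z"]) auto

lemma odd_card_xor:
  "(odd (card {s::'a::finite. P s}) \<noteq> odd (card {s. R s})) = odd (card {s. P s \<noteq> R s})"
proof -
  have P: "card {s. P s} = card {s. P s \<and> R s} + card {s. P s \<and> \<not> R s}"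
    by (subst card_Un_disjoint[symmetric]) (auto intro!: arg_cong[where f=card])
  have R: "card {s. R s} = card {s. P s \<and> R s} + card {s. R s \<and> \<not> P s}"
    by (subst card_Un_disjoint[symmetric]) (auto intro!: arg_cong[where f=card])
  have PR: "card {s. P s \<noteq> R s} = card {s. P s \<and> \<not> R s} + card {s. R s \<and> \<not> P s}"
    by (subst card_Un_disjoint[symmetric]) (auto intro!: arg_cong[where f=card])
  show ?thesis
    unfolding P R PR by presburger
qed

lemma dot_comm: "dot a b = dot b a"
  by (simp add: dot_def conj_commute)

lemma dot_vadd_right: "dot b (vadd x y) = (dot b x \<noteq> dot b y)"
proof -
  have "{i. b i \<and> vadd x y i} = {i. (b i \<and> x i) \<noteq> (b i \<and> y i)}"
    by (auto simp: vadd_def)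
  then show ?thesis
    unfolding dot_def by (simp only: odd_card_xor)
qed

lemma dot_vadd_left: "dot (vadd x y) b = (dot x b \<noteq> dot y b)"
  using dot_vadd_right[of b x y] by (simp only: dot_comm[of b])

lemma dot_vzero [simp]: "dot vzero x = False" "dot x vzero = False"
  by (simp_all add: dot_def vzero_def)

lemma dot_nondegenerate:
  assumes "\<And>a. \<not> dot u a"
  shows "u = vzero"
proof (rule ccontr)
  assume "u \<noteq> vzero"
  then obtain i where "u i"
    by (auto simp: vzero_def fun_eq_iff)
  then have "{j. u j \<and> j = i} = {i}"
    by auto
  then have "dot u (\<lambda>j. j = i)"
    by (simp add: dot_def)
  with assms show False
    by blast
qed

lemma sgn2_xor: "sgn2 (a \<noteq> b) = sgn2 a * sgn2 b"
  by (simp add: sgn2_def)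

lemma sgn2_not: "sgn2 (\<not> a) = - sgn2 a"
  by (simp add: sgn2_def)

lemma sgn2_False [simp]: "sgn2 False = 1"
  by (simp add: sgn2_def)

lemma sgn2_power2 [simp]: "(sgn2 a)\<^sup>2 = 1"
  by (simp add: sgn2_def)

lemma sum_sgn2_additive:
  fixes R :: "('n::finite) vec2 set"
  assumes closed: "\<And>u v. u \<in> R \<Longrightarrow> v \<in> R \<Longrightarrow> vadd u v \<in> R"
    and additive: "\<And>u v. u \<in> R \<Longrightarrow> v \<in> R \<Longrightarrow> \<phi> (vadd u v) = (\<phi> u \<noteq> \<phi> v)"
  shows "(\<Sum>u\<in>R. sgn2 (\<phi> u)) = (if \<forall>u\<in>R. \<not> \<phi> u then int (card R) else 0)"
proof (cases "\<forall>u\<in>R. \<not> \<phi> u")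
  case True
  then show ?thesis
    by simp
next
  case False
  then obtain z where z: "z \<in> R" "\<phi> z"
    by blast
  have "(\<Sum>u\<in>R. sgn2 (\<phi> u)) = (\<Sum>u\<in>R. sgn2 (\<phi> (vadd u z)))"
    by (rule sum.reindex_bij_witness[where i="\<lambda>u. vadd u z" and j="\<lambda>u. vadd u z"])
      (auto simp: closed z)
  also have "\<dots> = - (\<Sum>u\<in>R. sgn2 (\<phi> u))"
    by (simp add: additive z sgn2_not sum_negf)
  finally show ?thesis
    using z by auto
qed

lemma sum_sgn2_dot:
  "(\<Sum>a\<in>UNIV. sgn2 (dot u a)) = (if u = vzero then 2 ^ CARD('n) else 0)"
  for u :: "('n::finite) vec2"
proof -
  have "(\<forall>a\<in>UNIV. \<not> dot u a) \<longleftrightarrow> u = vzero"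
    using dot_nondegenerate by auto
  then show ?thesis
    using sum_sgn2_additive[of UNIV "dot u"] by (simp add: dot_vadd_right card_vec2)
qed

definition boolean_derivative :: "('n vec2 \<Rightarrow> bool) \<Rightarrow> 'n vec2 \<Rightarrow> 'n vec2 \<Rightarrow> bool" where
  "boolean_derivative f u x = (f x \<noteq> f (vadd x u))"

definition affine_bool :: "('n vec2 \<Rightarrow> bool) \<Rightarrow> bool" where
  "affine_bool g \<longleftrightarrow> (\<forall>x y. g (vadd x y) = ((g x \<noteq> g y) \<noteq> g vzero))"

lemma affine_bool_derivative_quadratic_form:
  fixes q :: "'n::finite \<Rightarrow> 'n \<Rightarrow> bool"
  shows "affine_bool (boolean_derivative (\<lambda>x. odd (card {(i, j). q i j \<and> x i \<and> x j})) u)"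
proof -
  define M where "M x p = (q (fst p) (snd p) \<and> x (fst p) \<and> x (snd p))"
    for x :: "'n vec2" and p
  define Q where "Q x = odd (card {p. M x p})" for x
  have xor8: "((Q (vadd x y) \<noteq> Q (vadd (vadd x y) u)) \<noteq>
      (((Q x \<noteq> Q (vadd x u)) \<noteq> (Q y \<noteq> Q (vadd y u))) \<noteq> (Q vzero \<noteq> Q u))) \<longleftrightarrow> False"
    for x y
  proof -
    \<comment> \<open>the third derivative of each monomial q i j x_i x_j vanishes\<close>
    have "\<not> ((M (vadd x y) p \<noteq> M (vadd (vadd x y) u) p) \<noteq>
          (((M x p \<noteq> M (vadd x u) p) \<noteq> (M y p \<noteq> M (vadd y u) p)) \<noteq> (M vzero p \<noteq> M u p)))" for p
      unfolding M_def vadd_def vzero_def by argo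
    then show ?thesis
      unfolding Q_def by (simp only: odd_card_xor) simp
  qed
  have Q_eq: "(\<lambda>x. odd (card {(i, j). q i j \<and> x i \<and> x j})) = Q"
    unfolding Q_def M_def split_def ..
  show ?thesis
    unfolding Q_eq affine_bool_def boolean_derivative_def
  proof (intro allI)
    fix x y
    show "(Q (vadd x y) \<noteq> Q (vadd (vadd x y) u)) =
        (((Q x \<noteq> Q (vadd x u)) \<noteq> (Q y \<noteq> Q (vadd y u))) \<noteq> (Q vzero \<noteq> Q (vadd vzero u)))"
      using xor8[of x y] by simp
  qed
qed

lemma boolean_derivative_add_affine:
  "boolean_derivative (\<lambda>x. (Q x \<noteq> dot l x) \<noteq> c) u x = (boolean_derivative Q u x \<noteq> dot l u)"
  by (simp add: boolean_derivative_def dot_vadd_right) argo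

lemma affine_bool_xor_const:
  assumes "affine_bool g"
  shows "affine_bool (\<lambda>x. g x \<noteq> c)"
  unfolding affine_bool_def
proof (intro allI)
  fix x y
  have "g (vadd x y) = ((g x \<noteq> g y) \<noteq> g vzero)"
    using assms by (simp add: affine_bool_def)
  then show "(g (vadd x y) \<noteq> c) = (((g x \<noteq> c) \<noteq> (g y \<noteq> c)) \<noteq> (g vzero \<noteq> c))"
    by argo
qed

lemma quad_plus_affine_imp_affine_bool_derivative:
  assumes "quad_plus_affine f"
  shows "affine_bool (boolean_derivative f u)"
proof -
  obtain q l c
    where f: "f = (\<lambda>x. (odd (card {(i, j). q i j \<and> x i \<and> x j}) \<noteq> dot l x) \<noteq> c)"
    using assms unfolding quad_plus_affine_def by blast
  have "boolean_derivative f u =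
      (\<lambda>x. boolean_derivative (\<lambda>x. odd (card {(i, j). q i j \<and> x i \<and> x j})) u x \<noteq> dot l u)"
    unfolding f by (intro ext) (rule boolean_derivative_add_affine)
  then show ?thesis
    by (simp only: affine_bool_xor_const affine_bool_derivative_quadratic_form)
qed

(* The linear space of f: its dimension is the k of the amplitude 2^((n+k)/2). *)
definition radical :: "('n vec2 \<Rightarrow> bool) \<Rightarrow> 'n vec2 set" where
  "radical f = {u. \<forall>x. boolean_derivative f u x = boolean_derivative f u vzero}"

lemma vzero_in_radical: "vzero \<in> radical f"
  by (simp add: radical_def boolean_derivative_def)

lemma vadd_in_radical:
  assumes "u \<in> radical f" "v \<in> radical f"
  shows "vadd u v \<in> radical f"
proof -
  have u: "(f x \<noteq> f (vadd x u)) = (f vzero \<noteq> f u)" for x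
    using assms(1) by (simp add: radical_def boolean_derivative_def)
  have v: "(f x \<noteq> f (vadd x v)) = (f vzero \<noteq> f v)" for x
    using assms(2) by (simp add: radical_def boolean_derivative_def)
  have "(f x \<noteq> f (vadd x (vadd u v))) = (f vzero \<noteq> f (vadd u v))" for x
    using u[of x] v[of "vadd x u"] u[of vzero] v[of u] by (simp add: vadd_assoc) argo
  then show ?thesis
    by (simp add: radical_def boolean_derivative_def)
qed

definition walsh_bool :: "(('n::finite) vec2 \<Rightarrow> bool) \<Rightarrow> 'n vec2 \<Rightarrow> int" where
  "walsh_bool f a = (\<Sum>x\<in>UNIV. sgn2 (f x \<noteq> dot x a))"

definition autocorrelation :: "(('n::finite) vec2 \<Rightarrow> bool) \<Rightarrow> 'n vec2 \<Rightarrow> int" where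
  "autocorrelation f u = (\<Sum>x\<in>UNIV. sgn2 (boolean_derivative f u x))"

lemma walsh_bool_power2_eq_sum_autocorrelation:
  "(walsh_bool f a)\<^sup>2 = (\<Sum>u\<in>UNIV. sgn2 (dot u a) * autocorrelation f u)"
proof -
  have "(walsh_bool f a)\<^sup>2 =
      (\<Sum>x\<in>UNIV. \<Sum>y\<in>UNIV. sgn2 (f x \<noteq> dot x a) * sgn2 (f y \<noteq> dot y a))"
    unfolding walsh_bool_def power2_eq_square by (rule sum_product)
  also have "\<dots> = (\<Sum>x\<in>UNIV. \<Sum>u\<in>UNIV.
      sgn2 (f x \<noteq> dot x a) * sgn2 (f (vadd x u) \<noteq> dot (vadd x u) a))"
    by (rule sum.cong[OF refl], rule sum_vadd_shift[symmetric])
  also have "\<dots> = (\<Sum>x\<in>UNIV. \<Sum>u\<in>UNIV. sgn2 (dot u a) * sgn2 (boolean_derivative f u x))"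
    by (intro sum.cong refl) (auto simp: boolean_derivative_def dot_vadd_left sgn2_def)
  also have "\<dots> = (\<Sum>u\<in>UNIV. sgn2 (dot u a) * autocorrelation f u)"
    by (subst sum.swap) (simp add: autocorrelation_def sum_distrib_left)
  finally show ?thesis .
qed

lemma sum_walsh_bool_power2:
  "(\<Sum>a\<in>UNIV. (walsh_bool f a)\<^sup>2) = 2 ^ CARD('n) * 2 ^ CARD('n)"
  for f :: "('n::finite) vec2 \<Rightarrow> bool"
proof -
  have "(\<Sum>a\<in>UNIV. (walsh_bool f a)\<^sup>2) =
      (\<Sum>u\<in>UNIV. autocorrelation f u * (\<Sum>a\<in>UNIV. sgn2 (dot u a)))"
    unfolding walsh_bool_power2_eq_sum_autocorrelation by (subst sum.swap) (simp add: sum_distrib_left mult.commute)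
  also have "\<dots> = autocorrelation f vzero * 2 ^ CARD('n)"
    by (simp add: sum_sgn2_dot if_distrib[where f="\<lambda>t. _ * t"] cong: if_cong)
  also have "autocorrelation f vzero = 2 ^ CARD('n)"
    by (simp add: autocorrelation_def boolean_derivative_def card_vec2)
  finally show ?thesis .
qed

lemma autocorrelation_affine_bool_derivative:
  fixes f :: "('n::finite) vec2 \<Rightarrow> bool"
  assumes "affine_bool (boolean_derivative f u)"
  shows "autocorrelation f u =
    (if u \<in> radical f then 2 ^ CARD('n) * sgn2 (boolean_derivative f u vzero) else 0)"
proof -
  let ?D = "boolean_derivative f u"
  define \<phi> where "\<phi> x = (?D x \<noteq> ?D vzero)" for x
  have additive: "\<phi> (vadd x y) = (\<phi> x \<noteq> \<phi> y)" for x y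
    using assms unfolding affine_bool_def \<phi>_def by (metis (full_types))
  have "autocorrelation f u = sgn2 (?D vzero) * (\<Sum>x\<in>UNIV. sgn2 (\<phi> x))"
    unfolding autocorrelation_def \<phi>_def sum_distrib_left
    by (intro sum.cong refl) (simp add: sgn2_def)
  moreover have "(\<forall>x\<in>UNIV. \<not> \<phi> x) \<longleftrightarrow> u \<in> radical f"
    by (simp add: \<phi>_def radical_def)
  ultimately show ?thesis
    using sum_sgn2_additive[of UNIV \<phi>] additive by (simp add: card_vec2 mult.commute)
qed

lemma walsh_bool_power2_cases:
  fixes f :: "('n::finite) vec2 \<Rightarrow> bool"
  assumes affine: "\<And>u. affine_bool (boolean_derivative f u)"
  shows "(walsh_bool f a)\<^sup>2 = 0 \<or> (walsh_bool f a)\<^sup>2 = 2 ^ CARD('n) * int (card (radical f))"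
proof -
  define \<phi> where "\<phi> u = (dot u a \<noteq> boolean_derivative f u vzero)" for u
  have "(walsh_bool f a)\<^sup>2 =
      (\<Sum>u\<in>UNIV. if u \<in> radical f then 2 ^ CARD('n) * sgn2 (\<phi> u) else 0)"
    unfolding walsh_bool_power2_eq_sum_autocorrelation autocorrelation_affine_bool_derivative[OF affine]
    by (intro sum.cong refl) (auto simp: \<phi>_def sgn2_def)
  also have "\<dots> = 2 ^ CARD('n) * (\<Sum>u\<in>radical f. sgn2 (\<phi> u))"
    by (simp add: sum.If_cases sum_distrib_left)
  finally have W: "(walsh_bool f a)\<^sup>2 = 2 ^ CARD('n) * (\<Sum>u\<in>radical f. sgn2 (\<phi> u))" .
  have "\<phi> (vadd u v) = (\<phi> u \<noteq> \<phi> v)" if "v \<in> radical f" for u v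
  proof -
    have "(f u \<noteq> f (vadd u v)) = (f vzero \<noteq> f v)"
      using that by (simp add: radical_def boolean_derivative_def)
    then show ?thesis
      unfolding \<phi>_def boolean_derivative_def dot_vadd_left by auto
  qed
  then show ?thesis
    using W sum_sgn2_additive[of "radical f" \<phi>] by (simp add: vadd_in_radical split: if_splits)
qed

lemma abs_walsh_le_amplitude: "\<bar>walsh F b a\<bar> \<le> amplitude F b"
  unfolding amplitude_def by (rule Max_ge) (auto simp: full_SetCompr_eq)

lemma amplitude_attained: "\<exists>a. amplitude F b = \<bar>walsh F b a\<bar>"
proof -
  have "amplitude F b \<in> {\<bar>walsh F b a\<bar> | a. True}"
    unfolding amplitude_def by (rule Max_in) (auto simp: full_SetCompr_eq)
  then show ?thesis
    by blast
qed

lemma walsh_eq_walsh_bool: "walsh F b a = walsh_bool (component F b) a"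
  by (simp add: walsh_def walsh_bool_def)

lemma amplitude_power2:
  fixes F :: "('n::finite) vec2 \<Rightarrow> ('m::finite) vec2"
  assumes "quadratic F"
  shows "(amplitude F b)\<^sup>2 = 2 ^ CARD('n) * int (card (radical (component F b)))"
proof -
  let ?f = "component F b"
  let ?K = "2 ^ CARD('n) * int (card (radical ?f))"
  have affine: "affine_bool (boolean_derivative ?f u)" for u
    using assms quad_plus_affine_imp_affine_bool_derivative unfolding quadratic_def by blast
  obtain a0 where a0: "amplitude F b = \<bar>walsh_bool ?f a0\<bar>"
    using amplitude_attained walsh_eq_walsh_bool by metis
  obtain a1 where "walsh_bool ?f a1 \<noteq> 0"
    using sum_walsh_bool_power2[of ?f] by fastforce
  then have "?K = (walsh_bool ?f a1)\<^sup>2"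
    using walsh_bool_power2_cases[OF affine] by fastforce
  also have "\<dots> \<le> (amplitude F b)\<^sup>2"
    using abs_walsh_le_amplitude[of F b a1] a0
    by (simp add: abs_le_square_iff walsh_eq_walsh_bool)
  finally have "?K \<le> (amplitude F b)\<^sup>2" .
  moreover have "radical ?f \<noteq> {}"
    using vzero_in_radical by blast
  then have "?K > 0"
    by (simp add: card_gt_0_iff)
  ultimately show ?thesis
    using walsh_bool_power2_cases[OF affine, of a0] a0 by auto
qed

lemma card_mult_card_le_of_inter:
  fixes R S :: "('n::finite) vec2 set"
  assumes R: "\<And>u v. u \<in> R \<Longrightarrow> v \<in> R \<Longrightarrow> vadd u v \<in> R"
    and S: "\<And>u v. u \<in> S \<Longrightarrow> v \<in> S \<Longrightarrow> vadd u v \<in> S"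
    and RS: "R \<inter> S \<subseteq> {vzero}"
  shows "card R * card S \<le> 2 ^ CARD('n)"
proof -
  have "inj_on (\<lambda>(u, v). vadd u v) (R \<times> S)"
  proof (rule inj_onI, clarify)
    fix u v u' v'
    assume h: "u \<in> R" "v \<in> S" "u' \<in> R" "v' \<in> S" "vadd u v = vadd u' v'"
    then have e: "vadd u u' = vadd v v'"
      by (auto simp: vadd_def fun_eq_iff)
    then have "vadd u u' \<in> R \<inter> S"
      using R[OF h(1,3)] S[OF h(2,4)] by simp
    then have "vadd u u' = vzero"
      using RS by auto
    with e show "u = u' \<and> v = v'"
      by (metis vadd_eq_vzero_iff)
  qed
  then have "card R * card S = card ((\<lambda>(u, v). vadd u v) ` (R \<times> S))"
    by (simp add: card_image card_cartesian_product)
  also have "\<dots> \<le> card (UNIV :: 'n vec2 set)"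
    by (rule card_mono) auto
  finally show ?thesis
    by (simp add: card_vec2)
qed

lemma card_pairs_same_image:
  fixes g :: "'a::finite \<Rightarrow> 'b"
  shows "card {(x, y). g x = g y} = (\<Sum>x\<in>UNIV. card {y. g x = g y})"
proof -
  have "{(x, y). g x = g y} = (SIGMA x:UNIV. {y. g x = g y})"
    by auto
  then show ?thesis
    by simp
qed

lemma sgn2_dot_mult: "sgn2 (dot b z) * sgn2 (dot b w) = sgn2 (dot (vadd z w) b)"
  by (simp only: dot_comm[of "vadd z w" b] dot_vadd_right sgn2_xor)

lemma sum_power2_sum_sgn2_dot:
  fixes g :: "'a::finite \<Rightarrow> ('m::finite) vec2"
  shows "(\<Sum>b\<in>UNIV. (\<Sum>x\<in>UNIV. sgn2 (dot b (g x)))\<^sup>2) =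
    2 ^ CARD('m) * int (card {(x, y). g x = g y})"
proof -
  have "(\<Sum>b\<in>UNIV. (\<Sum>x\<in>UNIV. sgn2 (dot b (g x)))\<^sup>2) =
      (\<Sum>b\<in>UNIV. \<Sum>x\<in>UNIV. \<Sum>y\<in>UNIV. sgn2 (dot b (g x)) * sgn2 (dot b (g y)))"
    by (simp add: power2_eq_square sum_product)
  also have "\<dots> = (\<Sum>x\<in>UNIV. \<Sum>y\<in>UNIV. \<Sum>b\<in>UNIV. sgn2 (dot (vadd (g x) (g y)) b))"
    by (subst sum.swap, rule sum.cong[OF refl], subst sum.swap) (simp only: sgn2_dot_mult)
  also have "\<dots> = (\<Sum>x\<in>UNIV. int (card {y. g x = g y}) * 2 ^ CARD('m))"
    by (simp add: sum_sgn2_dot vadd_eq_vzero_iff sum.If_cases)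
  also have "\<dots> = 2 ^ CARD('m) * int (\<Sum>x\<in>UNIV. card {y. g x = g y})"
    by (simp add: sum_distrib_left mult.commute)
  finally show ?thesis
    by (simp only: card_pairs_same_image)
qed

lemma card_pairs_same_image_le:
  fixes g :: "'a::finite \<Rightarrow> 'b"
  assumes "\<And>z. card {x. g x = z} \<le> k"
  shows "card {(x, y). g x = g y} \<le> k * CARD('a)"
proof -
  have "card {(x, y). g x = g y} \<le> (\<Sum>x\<in>(UNIV::'a set). k)"
    unfolding card_pairs_same_image using assms
    by (intro sum_mono) (metis (mono_tags, lifting) Collect_cong)
  then show ?thesis
    by (simp add: mult.commute)
qed

lemma sum_sgn2_dot_derivative_power2:
  fixes F :: "('n::finite) vec2 \<Rightarrow> ('m::finite) vec2"
  assumes "u \<in> radical (component F b)"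
  shows "(\<Sum>x\<in>UNIV. sgn2 (dot b (vadd (F x) (F (vadd x u)))))\<^sup>2 = 2 ^ CARD('n) * 2 ^ CARD('n)"
proof -
  have "dot b (vadd (F x) (F (vadd x u))) = boolean_derivative (component F b) u vzero" for x
    using assms by (simp add: radical_def boolean_derivative_def component_def dot_vadd_right)
  then have "(\<Sum>x\<in>UNIV. sgn2 (dot b (vadd (F x) (F (vadd x u))))) =
      2 ^ CARD('n) * sgn2 (boolean_derivative (component F b) u vzero)"
    by (simp add: card_vec2)
  then show ?thesis
    by (simp add: power_mult_distrib flip: power2_eq_square)
qed

lemma APN_radical_components_inter:
  fixes F :: "('n::finite) vec2 \<Rightarrow> 'n vec2"
  assumes "APN F" and "b \<noteq> c" and "b \<noteq> vzero" and "c \<noteq> vzero"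
  shows "radical (component F b) \<inter> radical (component F c) \<subseteq> {vzero}"
proof
  fix u
  assume u: "u \<in> radical (component F b) \<inter> radical (component F c)"
  define D where "D x = vadd (F x) (F (vadd x u))" for x
  define S where "S b' = (\<Sum>x\<in>UNIV. sgn2 (dot b' (D x)))" for b'
  have S_constant: "(S b')\<^sup>2 = 2 ^ CARD('n) * 2 ^ CARD('n)"
    if "u \<in> radical (component F b')" for b'
    unfolding S_def D_def using that by (rule sum_sgn2_dot_derivative_power2)
  have "u \<in> radical (component F vzero)"
    by (simp add: radical_def boolean_derivative_def component_def)
  then have "3 * (2 ^ CARD('n) * 2 ^ CARD('n)) = (\<Sum>b'\<in>{vzero, b, c}. (S b')\<^sup>2)"
    using u assms(2-4) S_constant by simp
  also have "\<dots> \<le> (\<Sum>b'\<in>UNIV. (S b')\<^sup>2)"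
    by (rule sum_mono2) auto
  also have "\<dots> = 2 ^ CARD('n) * int (card {(x, y). D x = D y})"
    unfolding S_def by (rule sum_power2_sum_sgn2_dot)
  finally have
    "2 ^ CARD('n) * (3 * 2 ^ CARD('n)) \<le> 2 ^ CARD('n) * int (card {(x, y). D x = D y})"
    by (simp only: mult.left_commute)
  then have "int (3 * 2 ^ CARD('n)) \<le> int (card {(x, y). D x = D y})"
    by simp
  then have "3 * 2 ^ CARD('n) \<le> card {(x, y). D x = D y}"
    by (simp only: of_nat_le_iff)
  show "u \<in> {vzero}"
  proof (rule ccontr)
    assume "u \<notin> {vzero}"
    then have "card {(x, y). D x = D y} \<le> 2 * 2 ^ CARD('n)"
      using card_pairs_same_image_le[of D 2] assms(1) by (simp add: APN_def D_def card_vec2)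
    with \<open>3 * 2 ^ CARD('n) \<le> card {(x, y). D x = D y}\<close>
    have "3 * 2 ^ CARD('n) \<le> (2 * 2 ^ CARD('n) :: nat)"
      by (rule order.trans)
    then show False
      by simp
  qed
qed

lemma amplitude_mult_amplitude_le:
  fixes F :: "('n::finite) vec2 \<Rightarrow> 'n vec2"
  assumes "quadratic F" and "APN F" and "b \<noteq> c" and "b \<noteq> vzero" and "c \<noteq> vzero"
  shows "real_of_int (amplitude F b) * real_of_int (amplitude F c) \<le>
    2 powr (3 * real CARD('n) / 2)"
proof -
  let ?k = "\<lambda>b. card (radical (component F b))"
  have "?k b * ?k c \<le> 2 ^ CARD('n)"
    using APN_radical_components_inter[OF assms(2-5)]
    by (intro card_mult_card_le_of_inter vadd_in_radical)
  then have "int (?k b * ?k c) \<le> int (2 ^ CARD('n))"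
    by (simp only: of_nat_le_iff)
  then have "2 ^ CARD('n) * 2 ^ CARD('n) * int (?k b * ?k c) \<le>
      2 ^ CARD('n) * 2 ^ CARD('n) * 2 ^ CARD('n)"
    by (intro mult_left_mono) simp_all
  moreover have
    "(amplitude F b * amplitude F c)\<^sup>2 = 2 ^ CARD('n) * 2 ^ CARD('n) * int (?k b * ?k c)"
    by (simp add: power_mult_distrib amplitude_power2[OF assms(1)] mult_ac)
  moreover have "(2::int) ^ CARD('n) * 2 ^ CARD('n) * 2 ^ CARD('n) = 2 ^ (3 * CARD('n))"
    by (simp add: numeral_3_eq_3 power_add)
  ultimately have "(amplitude F b * amplitude F c)\<^sup>2 \<le> 2 ^ (3 * CARD('n))"
    by simp
  then have
    "real_of_int ((amplitude F b * amplitude F c)\<^sup>2) \<le> real_of_int (2 ^ (3 * CARD('n)))"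
    by (simp only: of_int_le_iff)
  moreover have "(2 powr (3 * real CARD('n) / 2))\<^sup>2 = (2::real) powr (real (3 * CARD('n)))"
    by (simp add: powr_power)
  moreover have "\<dots> = 2 ^ (3 * CARD('n))"
    by (rule powr_realpow) simp
  ultimately have "(real_of_int (amplitude F b) * real_of_int (amplitude F c))\<^sup>2 \<le>
      (2 powr (3 * real CARD('n) / 2))\<^sup>2"
    by (simp only: of_int_power of_int_mult of_int_numeral)
  then show ?thesis
    by (rule power2_le_imp_le) simp
qed

lemma linearity_attained: "\<exists>b. b \<noteq> vzero \<and> amplitude F b = linearity F"
proof -
  let ?W = "{\<bar>walsh F b a\<bar> | a b. b \<noteq> vzero}"
  have fin: "finite ?W"
    by (rule finite_subset[of _ "range (\<lambda>(a, b). \<bar>walsh F b a\<bar>)"]) auto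
  have "(\<lambda>_. True) \<noteq> vzero"
    by (simp add: vzero_def fun_eq_iff)
  then have "?W \<noteq> {}"
    by blast
  with fin have "linearity F \<in> ?W"
    unfolding linearity_def by (rule Max_in)
  then obtain a b where b: "b \<noteq> vzero" and L: "linearity F = \<bar>walsh F b a\<bar>"
    by blast
  obtain a' where a': "amplitude F b = \<bar>walsh F b a'\<bar>"
    using amplitude_attained by blast
  have "\<bar>walsh F b a'\<bar> \<in> ?W"
    using b by blast
  with fin have "amplitude F b \<le> linearity F"
    unfolding a' linearity_def by (rule Max_ge)
  moreover have "linearity F \<le> amplitude F b"
    unfolding L by (rule abs_walsh_le_amplitude)
  ultimately show ?thesis
    using b by auto
qed

lemma amplitude_le_of_amplitude_eq:
  fixes F :: "('n::finite) vec2 \<Rightarrow> 'n vec2"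
  assumes "quadratic F" and "APN F" and "b \<noteq> c" and "b \<noteq> vzero" and "c \<noteq> vzero"
    and "real_of_int (amplitude F c) = 2 powr t"
  shows "real_of_int (amplitude F b) \<le> 2 powr (3 * real CARD('n) / 2 - t)"
proof -
  have "real_of_int (amplitude F b) * 2 powr t \<le> 2 powr (3 * real CARD('n) / 2)"
    using amplitude_mult_amplitude_le[OF assms(1-5)] assms(6) by simp
  then show ?thesis
    by (simp add: powr_diff pos_le_divide_eq)
qed

lemma unique_component_attaining_linearity:
  fixes F :: "('n::finite) vec2 \<Rightarrow> 'n vec2"
  assumes "quadratic F" and "APN F" and "t > 3 * real CARD('n) / 4"
    and "real_of_int (linearity F) = 2 powr t"
  shows "(\<exists>!b. b \<noteq> vzero \<and> real_of_int (amplitude F b) = 2 powr t) \<and>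
    (\<forall>b. b \<noteq> vzero \<and> real_of_int (amplitude F b) \<noteq> 2 powr t \<longrightarrow>
      real_of_int (amplitude F b) \<le> 2 powr (3 * real CARD('n) / 2 - t))"
proof -
  obtain b0 where b0: "b0 \<noteq> vzero" "real_of_int (amplitude F b0) = 2 powr t"
    using linearity_attained assms(4) by metis
  have other: "real_of_int (amplitude F b) \<le> 2 powr (3 * real CARD('n) / 2 - t)"
    if "b \<noteq> vzero" "b \<noteq> b0" for b
    using amplitude_le_of_amplitude_eq[OF assms(1,2) that(2,1) b0] .
  have less: "2 powr (3 * real CARD('n) / 2 - t) < 2 powr t"
    using assms(3) by simp
  show ?thesis
  proof (intro conjI allI impI)
    show "\<exists>!b. b \<noteq> vzero \<and> real_of_int (amplitude F b) = 2 powr t"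
      using b0 other less by (intro ex1I[of _ b0]) force+
  next
    fix b
    assume "b \<noteq> vzero \<and> real_of_int (amplitude F b) \<noteq> 2 powr t"
    then show "real_of_int (amplitude F b) \<le> 2 powr (3 * real CARD('n) / 2 - t)"
      using other b0 by force
  qed
qed

lemma card_large_amplitudes_le_1:
  fixes F :: "('n::finite) vec2 \<Rightarrow> 'n vec2"
  assumes "quadratic F" and "APN F"
  shows
    "card {b. b \<noteq> vzero \<and> real_of_int (amplitude F b) > 2 powr (3 * real CARD('n) / 4)} \<le> 1"
proof -
  let ?P = "2 powr (3 * real CARD('n) / 4)"
  have "b = c" if b: "b \<noteq> vzero" "real_of_int (amplitude F b) > ?P"
    and c: "c \<noteq> vzero" "real_of_int (amplitude F c) > ?P" for b c
  proof (rule ccontr)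
    assume "b \<noteq> c"
    have "2 powr (3 * real CARD('n) / 2) = ?P * ?P"
      by (simp flip: powr_add)
    also have "\<dots> < real_of_int (amplitude F b) * real_of_int (amplitude F c)"
      using b c powr_gt_zero[of 2 "3 * real CARD('n) / 4"]
      by (intro mult_strict_mono) linarith+
    finally show False
      using amplitude_mult_amplitude_le[OF assms \<open>b \<noteq> c\<close> b(1) c(1)] by simp
  qed
  then show ?thesis
    unfolding One_nat_def by (subst card_le_Suc0_iff_eq) auto
qed

theorem mainTheorem6:
  fixes F :: "('n::finite) vec2 \<Rightarrow> 'n vec2"
  assumes "even CARD('n)"
    and "quadratic F"
    and "APN F"
  shows "(\<forall>l::nat. real l > real CARD('n) / 2 \<and>
            real_of_int (linearity F) = 2 powr ((real CARD('n) + real l) / 2) \<longrightarrow>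
            (\<exists>!b. b \<noteq> vzero \<and> real_of_int (amplitude F b) = 2 powr ((real CARD('n) + real l) / 2)) \<and>
            (\<forall>b. b \<noteq> vzero \<and> real_of_int (amplitude F b) \<noteq> 2 powr ((real CARD('n) + real l) / 2) \<longrightarrow>
                 real_of_int (amplitude F b) \<le> 2 powr ((2 * real CARD('n) - real l) / 2)))
       \<and> card {b. b \<noteq> vzero \<and> real_of_int (amplitude F b) > 2 powr (3 * real CARD('n) / 4)} \<le> 1"
proof -
  let ?n = "real CARD('n)"
  have exponent: "3 * ?n / 2 - (?n + real l) / 2 = (2 * ?n - real l) / 2" for l :: nat
    by (simp add: field_simps)
  have "(\<exists>!b. b \<noteq> vzero \<and> real_of_int (amplitude F b) = 2 powr ((?n + real l) / 2)) \<and>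
      (\<forall>b. b \<noteq> vzero \<and> real_of_int (amplitude F b) \<noteq> 2 powr ((?n + real l) / 2) \<longrightarrow>
        real_of_int (amplitude F b) \<le> 2 powr ((2 * ?n - real l) / 2))"
    if l: "real l > ?n / 2" and L: "real_of_int (linearity F) = 2 powr ((?n + real l) / 2)"
    for l :: nat
  proof -
    have "3 * ?n / 4 < (?n + real l) / 2"
      using l by simp
    from unique_component_attaining_linearity[OF assms(2,3) this L] show ?thesis
      unfolding exponent .
  qed
  then show ?thesis
    using card_large_amplitudes_le_1[OF assms(2,3)] by blast
qed

end
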